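(* Let $T_1,T_2\subseteq\mathbb{R}^n$ be action sets. Then $T_1\subseteq T_2$ if and only if $\mathbf{W}(T_1)\supseteq\mathbf{W}(T_2)$, where $\mathbf{W}(T)=\bigcap_{t\in T}\mathbf{W}(t)$.
   Context: Single-commodity network pricing setting: $G=(\mathcal{V},\mathcal{A})$ directed graph, arc costs $c\ge0$, nonempty tolled arc set $\mathcal{A}_1\subsetneq\mathcal{A}$, $n=|\mathcal{A}_1|$, $N$ node–arc incidence matrix, single origin $o$ and destination $d$ connected by a toll-free path, $b_o=1$, $b_d=-1$, $b_i=0$ otherwise, $\mathcal{X}=\{x\in\mathbb{R}^{\mathcal{A}}: Nx=b,\ x\ge0\}$, $x_{\mathcal{A}_1}$ the restriction of $x$ to $\mathcal{A}_1$. Let $f(t)=\min\{c^\top x+t^\top x_{\mathcal{A}_1}: x\in\mathcal{X}\}$ for $t\in\mathbb{R}^n$, $t\ge0$, and $f(t)=-\infty$ otherwise. An action set is a set $T=\{t:(t,z)\in F\text{ for some }z\}$ where $F$ is a face of $\operatorname{epi}(-f)$ whose affine hull's direction space does not contain $(0,1)$. For $t\ge0$, $\mathbf{W}(t)$ is the set of $w$ such that $(w,x)$ is optimal for some $x$ in $\min_{w,x}\{c^\top x+t^\top w: x_{\mathcal{A}_1}\le w,\ Nx=b,\ w\ge0,\ x\ge0\}$. *)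

theory Defs
  imports "HOL-Analysis.Analysis"
begin

(* Graph: arcs are the elements of the finite type 'a (A = UNIV), vertices the
   elements of 'v; arc e goes from src e to tgt e.  Tolled arcs A1 = range emb,
   where emb :: 't => 'a is injective, so R^n = real^'t with n = CARD('t). *)

definition flow_set ::
  "('a::finite \<Rightarrow> 'v) \<Rightarrow> ('a \<Rightarrow> 'v) \<Rightarrow> 'v \<Rightarrow> 'v \<Rightarrow> (real^'a) set" where
  "flow_set src tgt orig dest =
     {x. (\<forall>i. (\<Sum>e\<in>{e. src e = i}. x$e) - (\<Sum>e\<in>{e. tgt e = i}. x$e)
              = (if i = orig then 1 else if i = dest then -1 else 0))
         \<and> (\<forall>e. 0 \<le> x$e)}"

definition restr :: "('t::finite \<Rightarrow> 'a::finite) \<Rightarrow> real^'a \<Rightarrow> real^'t" where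
  "restr emb x = (\<chi> k. x $ emb k)"

definition follower_val ::
  "real^'a \<Rightarrow> ('a::finite \<Rightarrow> 'v) \<Rightarrow> ('a \<Rightarrow> 'v) \<Rightarrow> 'v \<Rightarrow> 'v \<Rightarrow> ('t::finite \<Rightarrow> 'a)
     \<Rightarrow> real^'t \<Rightarrow> ereal" where
  "follower_val c src tgt orig dest emb t =
     (if (\<forall>k. 0 \<le> t$k)
      then Inf {ereal (c \<bullet> x + t \<bullet> restr emb x) | x. x \<in> flow_set src tgt orig dest}
      else -\<infinity>)"

definition epi_neg_f ::
  "real^'a \<Rightarrow> ('a::finite \<Rightarrow> 'v) \<Rightarrow> ('a \<Rightarrow> 'v) \<Rightarrow> 'v \<Rightarrow> 'v \<Rightarrow> ('t::finite \<Rightarrow> 'a)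
     \<Rightarrow> ((real^'t) \<times> real) set" where
  "epi_neg_f c src tgt orig dest emb =
     {(t, z). - follower_val c src tgt orig dest emb t \<le> ereal z}"

definition aff_dir :: "'b::real_vector set \<Rightarrow> 'b set" where
  "aff_dir S = {y - x | x y. x \<in> affine hull S \<and> y \<in> affine hull S}"

definition action_set ::
  "real^'a \<Rightarrow> ('a::finite \<Rightarrow> 'v) \<Rightarrow> ('a \<Rightarrow> 'v) \<Rightarrow> 'v \<Rightarrow> 'v \<Rightarrow> ('t::finite \<Rightarrow> 'a)
     \<Rightarrow> ((real^'t) set) \<Rightarrow> bool" where
  "action_set c src tgt orig dest emb T \<longleftrightarrow>
     (\<exists>F. F face_of epi_neg_f c src tgt orig dest emb
          \<and> (0::real^'t, 1::real) \<notin> aff_dir F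
          \<and> T = {t. \<exists>z. (t, z) \<in> F})"

(* feasibility for  min { c^T x + t^T w : x_{A1} <= w, N x = b, w >= 0, x >= 0 } *)
definition W_feasible ::
  "('a::finite \<Rightarrow> 'v) \<Rightarrow> ('a \<Rightarrow> 'v) \<Rightarrow> 'v \<Rightarrow> 'v \<Rightarrow> ('t::finite \<Rightarrow> 'a)
     \<Rightarrow> real^'t \<Rightarrow> real^'a \<Rightarrow> bool" where
  "W_feasible src tgt orig dest emb w x \<longleftrightarrow>
     x \<in> flow_set src tgt orig dest \<and> (\<forall>k. restr emb x $ k \<le> w $ k) \<and> (\<forall>k. 0 \<le> w $ k)"

definition W_of ::
  "real^'a \<Rightarrow> ('a::finite \<Rightarrow> 'v) \<Rightarrow> ('a \<Rightarrow> 'v) \<Rightarrow> 'v \<Rightarrow> 'v \<Rightarrow> ('t::finite \<Rightarrow> 'a)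
     \<Rightarrow> real^'t \<Rightarrow> ((real^'t) set)" where
  "W_of c src tgt orig dest emb t =
     {w. \<exists>x. W_feasible src tgt orig dest emb w x
            \<and> (\<forall>w' x'. W_feasible src tgt orig dest emb w' x' \<longrightarrow>
                  c \<bullet> x + t \<bullet> w \<le> c \<bullet> x' + t \<bullet> w')}"

(* W(T) = intersection of W(t) over t in T (UNIV for T empty) *)
definition W_set ::
  "real^'a \<Rightarrow> ('a::finite \<Rightarrow> 'v) \<Rightarrow> ('a \<Rightarrow> 'v) \<Rightarrow> 'v \<Rightarrow> 'v \<Rightarrow> ('t::finite \<Rightarrow> 'a)
     \<Rightarrow> ((real^'t) set) \<Rightarrow> ((real^'t) set)" where
  "W_set c src tgt orig dest emb T = (\<Inter>t\<in>T. W_of c src tgt orig dest emb t)"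

end

theory Submission
  imports Defs
begin

text \<open>
The follower's optimal cost f t is the minimum of c x + t x_A1 over the finitely many
support-minimal (basic) flows, so f is concave and piecewise affine on t \<ge> 0.  A face of
the epigraph of -f containing no vertical direction is the graph of -f over its action
set T; hence T is convex and f is affine on T.  Pick z in the relative interior of T: by
affinity, every flow optimal at z stays optimal on all of T, and every toll vanishing at z
vanishes on T.  Let t1 \<ge> 0 lie outside T.  If some toll is zero at z but positive at t1,
an optimal flow at z plus one unit of capacity on that arc gives w \<in> W(T) - W(t1); if some
flow optimal at z is not optimal at t1, its tolled part does.  Otherwise, at a point t3
slightly beyond z on the ray from t1, t3 \<ge> 0 and f t3 is at least the affine extrapolation
of f from t1 and z; the graph point over z then lies in an open segment from the graph
point over t1 to a point of the epigraph over t3, and the face property forces t1 \<in> T.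
\<close>

section \<open>Support-minimal points of standard-form polyhedra\<close>

definition supp :: "real^'a::finite \<Rightarrow> 'a set" where
  "supp x = {e. x $ e \<noteq> 0}"

(* For P = S \<inter> {x. 0 \<le> x} with S affine these are the vertices (basic solutions) of P. *)
definition support_minimal :: "(real^'a::finite) set \<Rightarrow> (real^'a) set" where
  "support_minimal P = {x \<in> P. \<forall>y\<in>P. supp y \<subseteq> supp x \<longrightarrow> supp y = supp x}"

lemma support_exchange:
  fixes x y :: "real^'a::finite"
  assumes S: "affine S" "x \<in> S" "y \<in> S" and nonneg: "0 \<le> x" "0 \<le> y"
    and sub: "supp y \<subseteq> supp x" and e0: "x $ e0 < y $ e0"
  obtains z s where "z \<in> S" "0 \<le> z" "supp z \<subset> supp x" "0 < s" "(1 + s) *\<^sub>R x = z + s *\<^sub>R y"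
proof -
  define D where "D = {e. x $ e < y $ e}"
  define ratio where "ratio e = x $ e / (y $ e - x $ e)" for e
  \<comment> \<open>the largest step s for which x + s (x - y) stays nonnegative\<close>
  define s where "s = Min (ratio ` D)"
  have D: "finite D" "D \<noteq> {}" using e0 by (auto simp: D_def)
  have x_pos: "0 < x $ e" if "e \<in> D" for e
  proof -
    have "0 < y $ e" using that nonneg by (auto simp: D_def less_eq_vec_def intro: le_less_trans)
    then have "e \<in> supp x" using sub by (force simp: supp_def)
    then show ?thesis using nonneg by (auto simp: supp_def less_eq_vec_def order_le_less)
  qed
  have "s \<in> ratio ` D" unfolding s_def using D by (intro Min_in) auto
  then obtain e1 where e1: "e1 \<in> D" "s = ratio e1" by blast
  have s_pos: "0 < s" using e1 x_pos[OF e1(1)] by (simp add: ratio_def D_def)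
  have s_le: "s * (y $ e - x $ e) \<le> x $ e" if "e \<in> D" for e
  proof -
    have "s \<le> ratio e" unfolding s_def using D that by (intro Min_le) auto
    then show ?thesis using that by (simp add: ratio_def D_def pos_le_divide_eq)
  qed
  define z where "z = (1 + s) *\<^sub>R x + (- s) *\<^sub>R y"
  have "z \<in> S" unfolding z_def by (rule mem_affine[OF S]) simp
  moreover have "0 \<le> z"
    unfolding less_eq_vec_def
  proof
    fix e
    show "0 $ e \<le> z $ e"
    proof (cases "e \<in> D")
      case True then show ?thesis using s_le[OF True] by (simp add: z_def algebra_simps)
    next
      case False
      then have "0 \<le> s * (x $ e - y $ e)" using s_pos by (simp add: D_def)
      moreover have "0 \<le> x $ e" using nonneg(1) by (simp add: less_eq_vec_def)
      ultimately show ?thesis by (simp add: z_def algebra_simps)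
    qed
  qed
  moreover have "supp z \<subset> supp x"
  proof -
    have "z $ e1 = 0" using e1 x_pos[OF e1(1)] by (simp add: z_def ratio_def D_def field_simps)
    moreover have "supp z \<subseteq> supp x" using sub by (auto simp: supp_def z_def)
    ultimately show ?thesis using x_pos[OF e1(1)] by (auto simp: supp_def)
  qed
  moreover have "(1 + s) *\<^sub>R x = z + s *\<^sub>R y" by (simp add: z_def)
  ultimately show ?thesis using s_pos by (intro that)
qed

lemma support_minimal_subset: "support_minimal P \<subseteq> P"
  by (auto simp: support_minimal_def)

lemma finite_support_minimal:
  assumes "affine S"
  shows "finite (support_minimal (S \<inter> {x. 0 \<le> x}))"
proof -
  let ?V = "support_minimal (S \<inter> {x. 0 \<le> x})"
  have no_smaller: "\<not> x $ e < y $ e"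
    if V: "x \<in> ?V" "y \<in> ?V" and eq: "supp x = supp y" for x y e
  proof
    assume lt: "x $ e < y $ e"
    have xy: "x \<in> S" "y \<in> S" "0 \<le> x" "0 \<le> y" using V by (auto simp: support_minimal_def)
    obtain z s where "z \<in> S" "0 \<le> z" "supp z \<subset> supp x" "0 < s"
        "(1 + s) *\<^sub>R x = z + s *\<^sub>R y"
      by (rule support_exchange[OF assms xy equalityD2[OF eq] lt])
    then show False using V(1) by (auto simp: support_minimal_def)
  qed
  have "inj_on supp ?V"
  proof (rule inj_onI)
    fix x y assume "x \<in> ?V" "y \<in> ?V" "supp x = supp y"
    then have "x $ e = y $ e" for e using no_smaller[of x y e] no_smaller[of y x e] by simp
    then show "x = y" by (simp add: vec_eq_iff)
  qed
  then show ?thesis by (rule finite_imageD[rotated]) simp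
qed

lemma support_minimal_le:
  assumes S: "affine S" and f: "linear f" "mono f" and x: "x \<in> S" "0 \<le> x"
  shows "\<exists>v \<in> support_minimal (S \<inter> {x. 0 \<le> x}). f v \<le> (f x :: real)"
  using x
proof (induction "card (supp x)" arbitrary: x rule: less_induct)
  case less
  show ?case
  proof (cases "x \<in> support_minimal (S \<inter> {x. 0 \<le> x})")
    case True then show ?thesis by blast
  next
    case False
    then obtain y where y: "y \<in> S" "0 \<le> y" "supp y \<subset> supp x"
      using less.prems by (auto simp: support_minimal_def)
    have IH: "\<exists>v \<in> support_minimal (S \<inter> {x. 0 \<le> x}). f v \<le> f x"
      if "u \<in> S" "0 \<le> u" "supp u \<subset> supp x" "f u \<le> f x" for u
      using less.hyps[OF psubset_card_mono[OF finite that(3)] that(1,2)] that(4) by (meson order_trans)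
    show ?thesis
    proof (cases "y \<le> x")
      case True
      show ?thesis using IH[OF y monoD[OF f(2) True]] .
    next
      case False
      then obtain e where "x $ e < y $ e" by (auto simp: less_eq_vec_def not_le)
      then obtain z s where z: "z \<in> S" "0 \<le> z" "supp z \<subset> supp x" "0 < s"
          "(1 + s) *\<^sub>R x = z + s *\<^sub>R y"
        using support_exchange[OF S less.prems(1) y(1) less.prems(2) y(2) less_imp_le[OF y(3)]] by blast
      have "(1 + s) * f x = f z + s * f y"
        using arg_cong[OF z(5), of f] by (simp only: linear_add[OF f(1)] linear_cmul[OF f(1)] real_scaleR_def)
      moreover have "s * f x < s * f y" if "f x < f y" using that z(4) by simp
      ultimately have "f z \<le> f x \<or> f y \<le> f x" by (simp add: distrib_right) linarith
      then show ?thesis using IH[OF z(1-3)] IH[OF y] by blast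
    qed
  qed
qed

section \<open>Flows\<close>

definition net_flow :: "('a::finite \<Rightarrow> 'v) \<Rightarrow> ('a \<Rightarrow> 'v) \<Rightarrow> real^'a \<Rightarrow> 'v \<Rightarrow> real" where
  "net_flow src tgt x i = (\<Sum>e\<in>{e. src e = i}. x $ e) - (\<Sum>e\<in>{e. tgt e = i}. x $ e)"

lemma net_flow_affine_comb:
  "net_flow src tgt (u *\<^sub>R x + v *\<^sub>R y) i = u * net_flow src tgt x i + v * net_flow src tgt y i"
  by (simp add: net_flow_def sum.distrib sum_distrib_left algebra_simps)

lemma affine_net_flow_level_set: "affine {x. \<forall>i. net_flow src tgt x i = b i}"
  unfolding affine_def by (simp add: net_flow_affine_comb flip: distrib_right)

lemma flow_set_eq:
  "flow_set src tgt orig dest =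
     {x. \<forall>i. net_flow src tgt x i = (if i = orig then 1 else if i = dest then -1 else 0)}
     \<inter> {x. 0 \<le> x}"
  by (auto simp: flow_set_def net_flow_def less_eq_vec_def)

lemma net_flow_add_axis:
  "net_flow src tgt (x + axis e 1) i =
     net_flow src tgt x i + (if src e = i then 1 else 0) - (if tgt e = i then 1 else 0)"
proof -
  have "(\<Sum>e'\<in>{e'. P e'}. axis e (1::real) $ e') = (if P e then 1 else 0)" for P
    by (simp add: axis_def sum.delta')
  then show ?thesis by (simp add: net_flow_def sum.distrib)
qed

lemma path_flow:
  assumes "(a, b) \<in> {(src e, tgt e) | e. P e}\<^sup>*"
  obtains x where "0 \<le> x"
    "\<And>i. net_flow src tgt x i = (if i = a then 1 else 0) - (if i = b then 1 else 0)"
  using assms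
proof (induction arbitrary: thesis rule: rtrancl_induct)
  case base
  show ?case by (rule base[of 0]) (simp_all add: net_flow_def)
next
  case (step b c)
  obtain x where x: "0 \<le> x"
    "\<And>i. net_flow src tgt x i = (if i = a then 1 else 0) - (if i = b then 1 else 0)"
    using step.IH by blast
  from step.hyps(2) obtain e where e: "b = src e" "c = tgt e" by blast
  have "0 \<le> x + axis e 1" using x(1) by (simp add: less_eq_vec_def axis_def)
  moreover have "net_flow src tgt (x + axis e 1) i = (if i = a then 1 else 0) - (if i = c then 1 else 0)"
    for i using x(2) e by (simp add: net_flow_add_axis)
  ultimately show ?case by (rule step.prems)
qed

lemma flow_set_nonempty:
  assumes "orig \<noteq> dest" "(orig, dest) \<in> {(src e, tgt e) | e. P e}\<^sup>*"
  shows "flow_set src tgt orig dest \<noteq> {}"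
proof -
  obtain x where "0 \<le> x"
    "\<And>i. net_flow src tgt x i = (if i = orig then 1 else 0) - (if i = dest then 1 else 0)"
    using path_flow[OF assms(2)] by blast
  then have "x \<in> flow_set src tgt orig dest" using assms(1) by (simp add: flow_set_eq)
  then show ?thesis by blast
qed

section \<open>Convexity and faces of epigraphs\<close>

lemma aff_dir_scaleR:
  assumes "d \<in> aff_dir S"
  shows "a *\<^sub>R d \<in> aff_dir S"
proof -
  obtain x y where xy: "x \<in> affine hull S" "y \<in> affine hull S" "d = y - x"
    using assms by (auto simp: aff_dir_def)
  have "(1 - a) *\<^sub>R x + a *\<^sub>R y \<in> affine hull S"
    using xy by (intro mem_affine) (simp_all add: affine_affine_hull)
  moreover have "a *\<^sub>R d = ((1 - a) *\<^sub>R x + a *\<^sub>R y) - x"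
    unfolding xy(3) by (simp add: algebra_simps)
  ultimately show ?thesis using xy(1) by (auto simp: aff_dir_def)
qed

lemma face_of_epigraph_graph:
  fixes g :: "'b::real_vector \<Rightarrow> real"
  assumes F: "F face_of epigraph D g" and nonvertical: "(0, 1) \<notin> aff_dir F"
    and tz: "(t, z) \<in> F"
  shows "z = g t"
proof (rule ccontr)
  assume "z \<noteq> g t"
  moreover have "t \<in> D" "g t \<le> z" using tz face_of_imp_subset[OF F] by (auto simp: mem_epigraph)
  ultimately have gt: "g t < z" by simp
  have "(t, g t) \<in> epigraph D g" "(t, 2 * z - g t) \<in> epigraph D g"
    using \<open>t \<in> D\<close> gt by (auto simp: mem_epigraph)
  moreover have "(t, z) \<in> open_segment (t, g t) (t, 2 * z - g t)"
    using gt unfolding in_segment(2)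
    by (intro conjI exI[of _ "1/2"]) (auto simp: field_simps simp flip: scaleR_add_left)
  ultimately have "(t, g t) \<in> F"
    using F tz unfolding face_of_def by blast
  then have "(t, z) - (t, g t) \<in> aff_dir F"
    unfolding aff_dir_def using tz by (blast intro: hull_inc)
  then have "(1 / (z - g t)) *\<^sub>R ((t, z) - (t, g t)) \<in> aff_dir F"
    by (rule aff_dir_scaleR)
  then show False using nonvertical gt by simp
qed

lemma scaleR_beyond_comb:
  fixes x z :: "'a::real_vector"
  assumes "e \<noteq> 0"
  shows "(1 - 1 / e) *\<^sub>R x + (1 / e) *\<^sub>R ((1 - e) *\<^sub>R x + e *\<^sub>R z) = z"
proof -
  have "(1 - 1 / e) + (1 / e) * (1 - e) = 0" using assms by (simp add: field_simps)
  then have "(1 - 1 / e) *\<^sub>R x + ((1 / e) * (1 - e)) *\<^sub>R x = 0"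
    by (simp flip: scaleR_add_left)
  then show ?thesis using assms by (simp add: scaleR_add_right)
qed

lemma face_of_epigraph_affine:
  fixes g :: "'b::real_vector \<Rightarrow> real"
  assumes F: "F face_of epigraph D g" and nonvertical: "(0, 1) \<notin> aff_dir F"
    and graph: "(x, g x) \<in> F" "(y, g y) \<in> F" and u: "0 \<le> u" "u \<le> 1"
  shows "((1 - u) *\<^sub>R x + u *\<^sub>R y, g ((1 - u) *\<^sub>R x + u *\<^sub>R y)) \<in> F"
    and "g ((1 - u) *\<^sub>R x + u *\<^sub>R y) = (1 - u) * g x + u * g y"
proof -
  have "(1 - u) *\<^sub>R (x, g x) + u *\<^sub>R (y, g y) \<in> F"
    using face_of_imp_convex[OF F] graph u unfolding convex_alt by blast
  then have comb: "((1 - u) *\<^sub>R x + u *\<^sub>R y, (1 - u) * g x + u * g y) \<in> F" by simp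
  from face_of_epigraph_graph[OF F nonvertical comb]
  show "g ((1 - u) *\<^sub>R x + u *\<^sub>R y) = (1 - u) * g x + u * g y" by simp
  with comb show "((1 - u) *\<^sub>R x + u *\<^sub>R y, g ((1 - u) *\<^sub>R x + u *\<^sub>R y)) \<in> F" by simp
qed

lemma face_of_epigraph_extend:
  fixes g :: "'b::real_vector \<Rightarrow> real"
  assumes F: "F face_of epigraph D g" and t2: "(t2, g t2) \<in> F" and t1: "t1 \<in> D" and e: "1 < e"
    and t3: "(1 - e) *\<^sub>R t1 + e *\<^sub>R t2 \<in> D"
    and below: "g ((1 - e) *\<^sub>R t1 + e *\<^sub>R t2) \<le> (1 - e) * g t1 + e * g t2"
  shows "(t1, g t1) \<in> F"
proof (cases "t1 = t2")
  case True then show ?thesis using t2 by simp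
next
  case False
  define p3 where "p3 = ((1 - e) *\<^sub>R t1 + e *\<^sub>R t2, (1 - e) * g t1 + e * g t2)"
  have "p3 \<in> epigraph D g" "(t1, g t1) \<in> epigraph D g"
    using t1 t3 below by (simp_all add: p3_def mem_epigraph)
  moreover have "(t2, g t2) \<in> open_segment (t1, g t1) p3"
    unfolding in_segment(2)
  proof (intro conjI exI[of _ "1 / e"])
    show "(t1, g t1) \<noteq> p3"
      using False e by (auto simp: p3_def algebra_simps)
    show "(t2, g t2) = (1 - 1 / e) *\<^sub>R (t1, g t1) + (1 / e) *\<^sub>R p3"
      using scaleR_beyond_comb[of e "(t1, g t1)" "(t2, g t2)"] e by (simp add: p3_def)
  qed (use e in auto)
  ultimately show ?thesis using F t2 unfolding face_of_def by blast
qed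

lemma concave_on_nonneg_zero_rel_interior:
  fixes h :: "'n::euclidean_space \<Rightarrow> real"
  assumes h: "concave_on T h" "\<forall>x\<in>T. 0 \<le> h x" and z: "z \<in> rel_interior T" "h z = 0"
    and x: "x \<in> T"
  shows "h x = 0"
proof -
  have "convex T" using h(1) by (rule concave_on_imp_convex)
  then obtain e where e: "1 < e" "(1 - e) *\<^sub>R x + e *\<^sub>R z \<in> T"
    using z(1) x convex_rel_interior_iff by blast
  define y where "y = (1 - e) *\<^sub>R x + e *\<^sub>R z"
  have "z = (1 - 1 / e) *\<^sub>R x + (1 / e) *\<^sub>R y"
    using scaleR_beyond_comb[of e x z] e(1) by (simp add: y_def)
  then have "(1 - 1 / e) * h x + (1 / e) * h y \<le> 0"
    using concave_onD[OF h(1), of "1 / e" x y] e x z(2) by (simp add: y_def)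
  moreover have "0 \<le> (1 / e) * h y" using h(2) e by (simp add: y_def)
  ultimately have "(1 - 1 / e) * h x \<le> 0" by linarith
  moreover have "0 < 1 - 1 / e" using e(1) by simp
  ultimately have "h x \<le> 0" by (simp add: mult_le_0_iff)
  with h(2) x show ?thesis by (simp add: order_antisym)
qed

lemma eventually_nonneg_beyond:
  fixes a b :: real
  assumes "0 \<le> a" "a = 0 \<Longrightarrow> b \<le> 0"
  shows "\<forall>\<^sub>F e in at_right 1. 0 \<le> (1 - e) * b + e * a"
proof (cases "a = 0")
  case True
  show ?thesis
    by (rule eventually_mono[OF eventually_at_right_less])
      (use True assms(2) in \<open>auto intro: mult_nonpos_nonpos\<close>)
next
  case False
  have "((\<lambda>e. (1 - e) * b + e * a) \<longlongrightarrow> (1 - 1) * b + 1 * a) (at_right 1)"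
    by (intro tendsto_intros)
  then have "\<forall>\<^sub>F e in at_right 1. 0 < (1 - e) * b + e * a"
    using assms(1) False by (intro order_tendstoD(1)) auto
  then show ?thesis by (auto elim!: eventually_mono)
qed

lemma concave_on_if_affine_comb:
  assumes "convex T"
    and "\<And>x y u. x \<in> T \<Longrightarrow> y \<in> T \<Longrightarrow> 0 < u \<Longrightarrow> u < 1 \<Longrightarrow>
           h ((1 - u) *\<^sub>R x + u *\<^sub>R y) = (1 - u) * h x + u * h y"
  shows "concave_on T h"
  unfolding concave_on_def by (rule convex_onI) (simp_all add: assms)

section \<open>The follower's value function\<close>

lemma inner_mono_nonneg:
  fixes q x y :: "real^'a::finite"
  assumes "0 \<le> q" "x \<le> y"
  shows "q \<bullet> x \<le> q \<bullet> y"
  using assms unfolding inner_vec_def less_eq_vec_def by (auto intro!: sum_mono mult_left_mono)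

lemma linear_restr: "linear (restr emb)"
  by (rule linearI) (simp_all add: restr_def vec_eq_iff)

lemma restr_mono: "x \<le> y \<Longrightarrow> restr emb x \<le> restr emb y"
  by (simp add: restr_def less_eq_vec_def)

locale toll_network =
  fixes c :: "real^'a::finite" and src tgt :: "'a \<Rightarrow> 'v" and orig dest :: 'v
    and emb :: "'t::finite \<Rightarrow> 'a"
  assumes c_nonneg: "0 \<le> c"
    and flows_nonempty: "flow_set src tgt orig dest \<noteq> {}"
begin

abbreviation X :: "(real^'a) set" where
  "X \<equiv> flow_set src tgt orig dest"

abbreviation V :: "(real^'a) set" where
  "V \<equiv> support_minimal X"

abbreviation feasible :: "real^'t \<Rightarrow> real^'a \<Rightarrow> bool" where
  "feasible \<equiv> W_feasible src tgt orig dest emb"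

abbreviation W :: "real^'t \<Rightarrow> (real^'t) set" where
  "W \<equiv> W_of c src tgt orig dest emb"

definition cost :: "real^'t \<Rightarrow> real^'a \<Rightarrow> real" where
  "cost t x = c \<bullet> x + t \<bullet> restr emb x"

definition min_cost :: "real^'t \<Rightarrow> real" where
  "min_cost t = Min (cost t ` V)"

lemma finite_V: "finite V"
  unfolding flow_set_eq by (intro finite_support_minimal affine_net_flow_level_set)

lemma ex_V_cost_le:
  assumes "0 \<le> t" "x \<in> X"
  shows "\<exists>v\<in>V. cost t v \<le> cost t x"
proof -
  have lin: "linear (cost t)"
    by (rule linearI) (simp_all add: cost_def inner_add_right algebra_simps
        linear_add[OF linear_restr] linear_cmul[OF linear_restr])
  have mono: "mono (cost t)"
    by (rule monoI) (simp add: cost_def add_mono inner_mono_nonneg c_nonneg assms(1) restr_mono)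
  have "x \<in> {x. \<forall>i. net_flow src tgt x i = (if i = orig then 1 else if i = dest then -1 else 0)}"
    "0 \<le> x"
    using assms(2) by (simp_all add: flow_set_eq)
  from support_minimal_le[OF affine_net_flow_level_set lin mono this] show ?thesis
    by (simp add: flow_set_eq)
qed

lemma V_nonempty: "V \<noteq> {}"
  using flows_nonempty ex_V_cost_le[of 0] by auto

lemma min_cost_le: "v \<in> V \<Longrightarrow> min_cost t \<le> cost t v"
  using finite_V by (simp add: min_cost_def)

lemma min_cost_attained:
  obtains v where "v \<in> V" "cost t v = min_cost t"
proof -
  have "min_cost t \<in> cost t ` V"
    unfolding min_cost_def using finite_V V_nonempty by (intro Min_in) auto
  then show ?thesis using that by auto
qed

lemma min_cost_le_cost: "0 \<le> t \<Longrightarrow> x \<in> X \<Longrightarrow> min_cost t \<le> cost t x"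
  using ex_V_cost_le min_cost_le order_trans by blast

lemma follower_val_eq: "0 \<le> t \<Longrightarrow> follower_val c src tgt orig dest emb t = ereal (min_cost t)"
proof -
  assume t: "0 \<le> t"
  obtain v where v: "v \<in> V" "cost t v = min_cost t" by (rule min_cost_attained)
  have "Inf {ereal (cost t x) | x. x \<in> X} = ereal (min_cost t)"
  proof (rule antisym)
    show "Inf {ereal (cost t x) | x. x \<in> X} \<le> ereal (min_cost t)"
      using v support_minimal_subset by (intro Inf_lower) (auto simp flip: v(2))
    show "ereal (min_cost t) \<le> Inf {ereal (cost t x) | x. x \<in> X}"
      using min_cost_le_cost[OF t] by (intro Inf_greatest) auto
  qed
  then show ?thesis using t by (simp add: follower_val_def cost_def less_eq_vec_def)
qed

lemma epi_neg_f_eq: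
  "epi_neg_f c src tgt orig dest emb = epigraph {t. 0 \<le> t} (\<lambda>t. - min_cost t)"
proof -
  have "(t, z) \<in> epi_neg_f c src tgt orig dest emb \<longleftrightarrow> 0 \<le> t \<and> - min_cost t \<le> z" for t z
  proof (cases "0 \<le> t")
    case True then show ?thesis by (simp add: epi_neg_f_def follower_val_eq)
  next
    case False then show ?thesis by (auto simp: epi_neg_f_def follower_val_def less_eq_vec_def)
  qed
  then show ?thesis by (simp add: set_eq_iff split_paired_all mem_epigraph)
qed

lemma cost_affine_comb:
  "cost ((1 - u) *\<^sub>R t + u *\<^sub>R t') x = (1 - u) * cost t x + u * cost t' x"
  by (simp add: cost_def inner_add_left algebra_simps)

lemma feasible_value_ge:
  assumes "0 \<le> t" "feasible w x"
  shows "min_cost t \<le> c \<bullet> x + t \<bullet> w"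
proof -
  have "min_cost t \<le> cost t x" using assms by (intro min_cost_le_cost) (simp_all add: W_feasible_def)
  also have "\<dots> \<le> c \<bullet> x + t \<bullet> w"
    using assms inner_mono_nonneg[of t "restr emb x" w]
    by (simp add: cost_def W_feasible_def less_eq_vec_def)
  finally show ?thesis .
qed

lemma mem_W_iff:
  assumes "0 \<le> t"
  shows "w \<in> W t \<longleftrightarrow> (\<exists>x. feasible w x \<and> c \<bullet> x + t \<bullet> w = min_cost t)"
proof
  assume "w \<in> W t"
  then obtain x where x: "feasible w x" "\<And>w' x'. feasible w' x' \<Longrightarrow> c \<bullet> x + t \<bullet> w \<le> c \<bullet> x' + t \<bullet> w'"
    by (auto simp: W_of_def)
  obtain v where v: "v \<in> V" "cost t v = min_cost t" by (rule min_cost_attained)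
  have "v \<in> X" using v(1) support_minimal_subset by blast
  then have "feasible (restr emb v) v"
    by (auto simp: W_feasible_def restr_def flow_set_eq less_eq_vec_def)
  then have "c \<bullet> x + t \<bullet> w \<le> min_cost t" using x(2) v(2) by (fastforce simp: cost_def)
  then show "\<exists>x. feasible w x \<and> c \<bullet> x + t \<bullet> w = min_cost t"
    using x(1) feasible_value_ge[OF assms x(1)] by (intro exI[of _ x]) simp
next
  assume "\<exists>x. feasible w x \<and> c \<bullet> x + t \<bullet> w = min_cost t"
  then show "w \<in> W t" using feasible_value_ge[OF assms] by (auto simp: W_of_def)
qed

section \<open>Action sets\<close>

lemma action_set_graph:
  assumes "action_set c src tgt orig dest emb T"
  obtains F where "F face_of epigraph {t. 0 \<le> t} (\<lambda>t. - min_cost t)" "(0, 1) \<notin> aff_dir F"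
    "\<And>t. t \<in> T \<longleftrightarrow> (t, - min_cost t) \<in> F"
proof -
  obtain F where F: "F face_of epigraph {t. 0 \<le> t} (\<lambda>t. - min_cost t)"
      and nonvertical: "(0, 1) \<notin> aff_dir F" and T: "T = {t. \<exists>z. (t, z) \<in> F}"
    using assms by (auto simp: action_set_def epi_neg_f_eq)
  have "t \<in> T \<longleftrightarrow> (t, - min_cost t) \<in> F" for t
    using face_of_epigraph_graph[OF F nonvertical] T by blast
  with F nonvertical show ?thesis by (rule that)
qed

lemma action_set_nonneg:
  assumes "action_set c src tgt orig dest emb T" "t \<in> T"
  shows "0 \<le> t"
proof -
  obtain F where "F face_of epigraph {t. 0 \<le> t} (\<lambda>t. - min_cost t)"
      "\<And>t. t \<in> T \<longleftrightarrow> (t, - min_cost t) \<in> F"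
    using action_set_graph[OF assms(1)] by blast
  then show ?thesis using assms(2) face_of_imp_subset by (fastforce simp: mem_epigraph)
qed

lemma action_set_affine_comb:
  assumes "action_set c src tgt orig dest emb T" "x \<in> T" "y \<in> T" "0 \<le> u" "u \<le> 1"
  shows "(1 - u) *\<^sub>R x + u *\<^sub>R y \<in> T"
    and "min_cost ((1 - u) *\<^sub>R x + u *\<^sub>R y) = (1 - u) * min_cost x + u * min_cost y"
proof -
  obtain F where F: "F face_of epigraph {t. 0 \<le> t} (\<lambda>t. - min_cost t)" "(0, 1) \<notin> aff_dir F"
      and T: "\<And>t. t \<in> T \<longleftrightarrow> (t, - min_cost t) \<in> F"
    using action_set_graph[OF assms(1)] by blast
  note comb = face_of_epigraph_affine[OF F, of x y u]
  show "(1 - u) *\<^sub>R x + u *\<^sub>R y \<in> T"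
    using comb(1) assms(2-5) T by blast
  show "min_cost ((1 - u) *\<^sub>R x + u *\<^sub>R y) = (1 - u) * min_cost x + u * min_cost y"
    using comb(2) assms(2-5) T by simp
qed

lemma convex_action_set: "action_set c src tgt orig dest emb T \<Longrightarrow> convex T"
  unfolding convex_alt using action_set_affine_comb(1) by blast

lemma optimal_on_action_set:
  assumes T: "action_set c src tgt orig dest emb T" and z: "z \<in> rel_interior T"
    and v: "v \<in> V" "cost z v = min_cost z" and t: "t \<in> T"
  shows "cost t v = min_cost t"
proof -
  have "concave_on T (\<lambda>t. cost t v - min_cost t)"
  proof (rule concave_on_if_affine_comb[OF convex_action_set[OF T]])
    fix x y and u :: real assume "x \<in> T" "y \<in> T" "0 < u" "u < 1"
    then have "min_cost ((1 - u) *\<^sub>R x + u *\<^sub>R y) = (1 - u) * min_cost x + u * min_cost y"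
      by (intro action_set_affine_comb(2)[OF T]) auto
    then show "cost ((1 - u) *\<^sub>R x + u *\<^sub>R y) v - min_cost ((1 - u) *\<^sub>R x + u *\<^sub>R y) =
        (1 - u) * (cost x v - min_cost x) + u * (cost y v - min_cost y)"
      using cost_affine_comb[of u x y v] by (simp add: algebra_simps)
  qed
  from concave_on_nonneg_zero_rel_interior[OF this _ z _ t]
  show ?thesis using min_cost_le[OF v(1)] v(2) by simp
qed

lemma zero_coordinate_on_action_set:
  assumes T: "action_set c src tgt orig dest emb T" and z: "z \<in> rel_interior T" "z $ k = 0"
    and t: "t \<in> T"
  shows "t $ k = 0"
proof -
  have "concave_on T (\<lambda>t. t $ k)"
    using convex_action_set[OF T] by (rule concave_on_if_affine_comb) simp
  from concave_on_nonneg_zero_rel_interior[OF this _ z t]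
  show ?thesis using action_set_nonneg[OF T] by (simp add: less_eq_vec_def)
qed

lemma action_set_extend:
  assumes T: "action_set c src tgt orig dest emb T" and z: "z \<in> T" and t1: "0 \<le> t1"
    and zero: "\<And>k. z $ k = 0 \<Longrightarrow> t1 $ k \<le> 0"
    and opt: "\<And>v. v \<in> V \<Longrightarrow> cost z v = min_cost z \<Longrightarrow> cost t1 v \<le> min_cost t1"
  shows "t1 \<in> T"
proof -
  obtain F where F: "F face_of epigraph {t. 0 \<le> t} (\<lambda>t. - min_cost t)"
      and graph: "\<And>t. t \<in> T \<longleftrightarrow> (t, - min_cost t) \<in> F"
    using action_set_graph[OF T] by blast
  have z_nonneg: "0 \<le> z $ k" for k using action_set_nonneg[OF T z] by (simp add: less_eq_vec_def)
  have "\<forall>\<^sub>F e in at_right 1. \<forall>k. 0 \<le> (1 - e) * t1 $ k + e * z $ k"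
    using z_nonneg zero by (intro eventually_all_finite allI eventually_nonneg_beyond)
  moreover have "\<forall>\<^sub>F e in at_right 1. \<forall>v\<in>V.
      0 \<le> (1 - e) * (cost t1 v - min_cost t1) + e * (cost z v - min_cost z)"
    using min_cost_le opt
    by (intro eventually_ball_finite[OF finite_V] ballI eventually_nonneg_beyond) force+
  ultimately have "\<forall>\<^sub>F e in at_right 1. 1 < e \<and> (\<forall>k. 0 \<le> (1 - e) * t1 $ k + e * z $ k) \<and>
      (\<forall>v\<in>V. 0 \<le> (1 - e) * (cost t1 v - min_cost t1) + e * (cost z v - min_cost z))"
    by (intro eventually_conj eventually_at_right_less)
  then obtain e where e: "1 < e" "\<And>k. 0 \<le> (1 - e) * t1 $ k + e * z $ k"
      "\<And>v. v \<in> V \<Longrightarrow> 0 \<le> (1 - e) * (cost t1 v - min_cost t1) + e * (cost z v - min_cost z)"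
    using eventually_happens'[of "at_right (1::real)"] by force
  define t3 where "t3 = (1 - e) *\<^sub>R t1 + e *\<^sub>R z"
  have "0 \<le> t3" using e(2) by (simp add: t3_def less_eq_vec_def)
  obtain v3 where v3: "v3 \<in> V" "cost t3 v3 = min_cost t3" by (rule min_cost_attained)
  have "(1 - e) * min_cost t1 + e * min_cost z \<le> min_cost t3"
    using e(3)[OF v3(1)] v3(2) cost_affine_comb[of e t1 z v3] by (simp add: t3_def algebra_simps)
  then have "(t1, - min_cost t1) \<in> F"
    using face_of_epigraph_extend[OF F _ _ e(1), of z] graph z t1 \<open>0 \<le> t3\<close>
    by (simp add: t3_def)
  then show ?thesis using graph by blast
qed

lemma W_separating_point:
  assumes v: "v \<in> V" and r: "0 \<le> r" and "T \<noteq> {}"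
    and T: "\<And>t. t \<in> T \<Longrightarrow> 0 \<le> t \<and> cost t v = min_cost t \<and> t \<bullet> r = 0"
    and t1: "0 \<le> t1" "min_cost t1 < cost t1 v + t1 \<bullet> r"
  shows "restr emb v + r \<in> W_set c src tgt orig dest emb T" "restr emb v + r \<notin> W t1"
proof -
  have "v \<in> X" using v support_minimal_subset by blast
  then have feasible: "feasible (restr emb v + r) v"
    using r by (auto simp: W_feasible_def flow_set_eq restr_def less_eq_vec_def)
  show "restr emb v + r \<in> W_set c src tgt orig dest emb T"
    unfolding W_set_def
  proof
    fix t assume "t \<in> T"
    with T feasible show "restr emb v + r \<in> W t"
      by (auto simp: mem_W_iff cost_def inner_add_right)
  qed
  show "restr emb v + r \<notin> W t1"
  proof
    assume "restr emb v + r \<in> W t1"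
    then obtain x where x: "feasible (restr emb v + r) x"
      "c \<bullet> x + t1 \<bullet> (restr emb v + r) = min_cost t1"
      using mem_W_iff[OF t1(1)] by blast
    obtain t2 where "t2 \<in> T" using \<open>T \<noteq> {}\<close> by blast
    \<comment> \<open>optimality of v at t2, where r costs nothing, bounds the untolled cost of x\<close>
    with T feasible_value_ge[OF _ x(1)] have "c \<bullet> v \<le> c \<bullet> x"
      by (force simp: cost_def inner_add_right)
    then show False using x(2) t1(2) by (simp add: cost_def inner_add_right)
  qed
qed

lemma ex_W_separating:
  assumes T: "action_set c src tgt orig dest emb T" and t1: "0 \<le> t1" "t1 \<notin> T"
  shows "\<exists>w \<in> W_set c src tgt orig dest emb T. w \<notin> W t1"
proof (cases "T = {}")
  case True
  have "- 1 \<notin> W t1" by (auto simp: W_of_def W_feasible_def)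
  then show ?thesis using True by (auto simp: W_set_def)
next
  case False
  obtain z where z: "z \<in> rel_interior T"
    using False convex_action_set[OF T] rel_interior_eq_empty by blast
  have "z \<in> T" using z rel_interior_subset by blast
  obtain v0 where v0: "v0 \<in> V" "cost z v0 = min_cost z" by (rule min_cost_attained)
  consider (zero) k where "z $ k = 0" "0 < t1 $ k"
    | (optimal) v where "v \<in> V" "cost z v = min_cost z" "min_cost t1 < cost t1 v"
    | (neither) "\<And>k. z $ k = 0 \<Longrightarrow> t1 $ k \<le> 0"
        "\<And>v. v \<in> V \<Longrightarrow> cost z v = min_cost z \<Longrightarrow> cost t1 v \<le> min_cost t1"
    by (meson not_le)
  then show ?thesis
  proof cases
    case zero
    have "0 \<le> axis k (1::real)" by (simp add: less_eq_vec_def axis_def)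
    moreover have "0 \<le> t \<and> cost t v0 = min_cost t \<and> t \<bullet> axis k 1 = 0" if "t \<in> T" for t
      using that action_set_nonneg[OF T] optimal_on_action_set[OF T z v0]
        zero_coordinate_on_action_set[OF T z zero(1)] by (simp add: inner_axis)
    moreover have "min_cost t1 < cost t1 v0 + t1 \<bullet> axis k 1"
      using min_cost_le[OF v0(1), of t1] zero(2) by (simp add: inner_axis)
    ultimately show ?thesis using W_separating_point[OF v0(1) _ False _ t1(1)] by blast
  next
    case optimal
    have "0 \<le> t \<and> cost t v = min_cost t \<and> t \<bullet> 0 = 0" if "t \<in> T" for t
      using that action_set_nonneg[OF T] optimal_on_action_set[OF T z optimal(1,2)] by simp
    then show ?thesis using W_separating_point[OF optimal(1) order_refl False _ t1(1)] optimal(3) by auto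
  next
    case neither
    then show ?thesis using action_set_extend[OF T \<open>z \<in> T\<close> t1(1)] t1(2) by blast
  qed
qed

end

theorem corollary1:
  fixes c :: "real^'a::finite"
    and src tgt :: "'a \<Rightarrow> 'v"
    and orig dest :: 'v
    and emb :: "'t::finite \<Rightarrow> 'a"
    and T1 T2 :: "((real^'t) set)"
  assumes "\<forall>e. 0 \<le> c $ e"
    and "inj emb"
    and "range emb \<noteq> UNIV"
    and "orig \<noteq> dest"
    and "(orig, dest) \<in> {(src e, tgt e) | e. e \<notin> range emb}\<^sup>*"
    and "action_set c src tgt orig dest emb T1"
    and "action_set c src tgt orig dest emb T2"
  shows "T1 \<subseteq> T2 \<longleftrightarrow>
           W_set c src tgt orig dest emb T2 \<subseteq> W_set c src tgt orig dest emb T1"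
proof -
  \<comment> \<open>The toll-free path only serves to make the flow set nonempty.\<close>
  interpret toll_network c src tgt orig dest emb
    using assms(1) flow_set_nonempty[OF assms(4,5)] by unfold_locales (simp add: less_eq_vec_def)
  show ?thesis
  proof
    assume "T1 \<subseteq> T2"
    then show "W_set c src tgt orig dest emb T2 \<subseteq> W_set c src tgt orig dest emb T1"
      unfolding W_set_def by blast
  next
    assume W_sub: "W_set c src tgt orig dest emb T2 \<subseteq> W_set c src tgt orig dest emb T1"
    show "T1 \<subseteq> T2"
    proof (rule subsetI, rule ccontr)
      fix t assume "t \<in> T1" "t \<notin> T2"
      then obtain w where "w \<in> W_set c src tgt orig dest emb T2" "w \<notin> W t"
        using ex_W_separating[OF assms(7) action_set_nonneg[OF assms(6)]] by blast
      then show False using W_sub \<open>t \<in> T1\<close> by (auto simp: W_set_def)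
    qed
  qed
qed

end
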